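(* Let $G=(V=[n],E,(p_{uv})_{(u,v)\in E})$ be an influence graph, $k\in\{2,\dots,n\}$, $\pi$ an optimal adaptive policy with $|\pi|=k$, and $x_v$ the probability that node $v$ is selected by $\pi$. Then for every partial realisation $\psi$, $$\mathbb{E}_{\mathbf L,\hat{\mathbf L}}\big[\sigma^2_{\mathbf L,\hat{\mathbf L},\psi}(dom(\psi)\cup dom(\hat\Psi_\pi))\,\big|\,\psi\subseteq\Phi\big]\le\mathbb{E}_{\mathbf L}\big[\sigma_{\mathbf L}(dom(\psi))\,\big|\,\psi\subseteq\Phi\big]+\sum_{v\in V\setminus dom(\psi)}x_v\,\Delta^2_\psi(v).$$
   Context: $G$ is a directed graph with activation probabilities $p_{uv}\in[0,1]$. $\mathbf L,\hat{\mathbf L}$ are independent random subsets of $E$, each containing every edge $(u,w)$ independently with probability $p_{uw}$. For $L\subseteq E$, $T\subseteq V$, $\sigma_L(T)$ is the number of nodes reachable by a directed path (length $\ge0$) in $(V,L)$ from $T$. For $T\subseteq V$, $\mathbf L^2(T):=\mathbf L\cup(\hat{\mathbf L}\cap\{(u,w)\in E:u\in T\})$. Realisations: $\Phi(u):=\{u\}\cup\{z:(u,z)\in\mathbf L\}$, $\hat\Phi(u):=\{u\}\cup\{z:(u,z)\in\hat{\mathbf L}\}$. A partial realisation $\psi$ is the restriction of $u\mapsto\{u\}\cup\{z:(u,z)\in L\}$ (for some $L\subseteq E$) to a set $dom(\psi)\subseteq V$; $\psi\subseteq\Phi$ is the event $\Phi(u)=\psi(u)$ for all $u\in dom(\psi)$.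 For $T\subseteq V$, $\sigma^2_{\mathbf L,\hat{\mathbf L},\psi}(T):=\sigma_{\mathbf L^2(T\setminus dom(\psi))}(T)$, and $\Delta^2_\psi(v):=\mathbb{E}[\sigma^2_{\mathbf L,\hat{\mathbf L},\psi}(\{v\}\cup dom(\psi))-\sigma^2_{\mathbf L,\hat{\mathbf L},\psi}(dom(\psi))\mid\psi\subseteq\Phi]$ (conditioning on events of positive probability). An adaptive policy $\pi$ maps partial realisations to a node or STOP; it is run from the empty realisation, and while $\pi(\psi')=v\ne$ STOP it sets $\psi'\leftarrow\psi'\cup\{(v,\Phi(v))\}$, ending with $\Psi_\pi$; $\sigma(\pi):=\mathbb{E}[\sigma_{\mathbf L}(dom(\Psi_\pi))]$; $|\pi|=k$ means $|dom(\Psi_\pi)|=k$ always; $\pi$ is optimal if it maximizes $\sigma(\pi)$ among policies with $|\pi|=k$. $\hat\Psi_\pi$ is the final partial realisation when $\pi$ is run with feedback $\hat\Phi(v)$ in place of $\Phi(v)$. *)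

theory Defs
  imports Complex_Main
begin

text \<open>Influence graph on a finite node type 'a (V = UNIV), edge set E, activation
probabilities p. Random live-edge sets L are subsets of E; the probability of a
given L is the product below (edges independent).\<close>

definition influence_graph :: "('a::finite \<times> 'a) set \<Rightarrow> ('a \<times> 'a \<Rightarrow> real) \<Rightarrow> bool" where
  "influence_graph E p \<longleftrightarrow> (\<forall>e\<in>E. 0 \<le> p e \<and> p e \<le> 1)"

definition prL :: "('a \<times> 'a) set \<Rightarrow> ('a \<times> 'a \<Rightarrow> real) \<Rightarrow> ('a \<times> 'a) set \<Rightarrow> real" where
  "prL E p L = (\<Prod>e\<in>E. if e \<in> L then p e else 1 - p e)"

definition expL :: "('a \<times> 'a) set \<Rightarrow> ('a \<times> 'a \<Rightarrow> real) \<Rightarrow> (('a \<times> 'a) set \<Rightarrow> real) \<Rightarrow> real" where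
  "expL E p f = (\<Sum>L\<in>Pow E. prL E p L * f L)"

definition expLL :: "('a \<times> 'a) set \<Rightarrow> ('a \<times> 'a \<Rightarrow> real)
     \<Rightarrow> (('a \<times> 'a) set \<Rightarrow> ('a \<times> 'a) set \<Rightarrow> real) \<Rightarrow> real" where
  "expLL E p f = (\<Sum>L\<in>Pow E. \<Sum>Lh\<in>Pow E. prL E p L * prL E p Lh * f L Lh)"

definition sigmaL :: "('a::finite \<times> 'a) set \<Rightarrow> 'a set \<Rightarrow> nat" where
  "sigmaL L T = card {w. \<exists>t\<in>T. (t, w) \<in> L\<^sup>*}"

definition L2 :: "('a \<times> 'a) set \<Rightarrow> ('a \<times> 'a) set \<Rightarrow> ('a \<times> 'a) set \<Rightarrow> 'a set \<Rightarrow> ('a \<times> 'a) set" where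
  "L2 E L Lh T = L \<union> (Lh \<inter> {(u, w). (u, w) \<in> E \<and> u \<in> T})"

definition realis :: "('a \<times> 'a) set \<Rightarrow> 'a \<Rightarrow> 'a set" where
  "realis L u = insert u {z. (u, z) \<in> L}"

type_synonym 'a prealis = "'a \<Rightarrow> 'a set option"

definition partial_realisation :: "('a \<times> 'a) set \<Rightarrow> 'a prealis \<Rightarrow> bool" where
  "partial_realisation E \<psi> \<longleftrightarrow> (\<exists>L\<subseteq>E. \<forall>u\<in>dom \<psi>. \<psi> u = Some (realis L u))"

text \<open>The event psi \<subseteq> Phi, as a property of the edge set L generating Phi.\<close>
definition consistent :: "'a prealis \<Rightarrow> ('a \<times> 'a) set \<Rightarrow> bool" where
  "consistent \<psi> L \<longleftrightarrow> (\<forall>u\<in>dom \<psi>. \<psi> u = Some (realis L u))"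

definition prob_cons :: "('a \<times> 'a) set \<Rightarrow> ('a \<times> 'a \<Rightarrow> real) \<Rightarrow> 'a prealis \<Rightarrow> real" where
  "prob_cons E p \<psi> = expL E p (\<lambda>L. if consistent \<psi> L then 1 else 0)"

definition cexpL :: "('a \<times> 'a) set \<Rightarrow> ('a \<times> 'a \<Rightarrow> real) \<Rightarrow> 'a prealis
     \<Rightarrow> (('a \<times> 'a) set \<Rightarrow> real) \<Rightarrow> real" where
  "cexpL E p \<psi> f = expL E p (\<lambda>L. if consistent \<psi> L then f L else 0) / prob_cons E p \<psi>"

definition cexpLL :: "('a \<times> 'a) set \<Rightarrow> ('a \<times> 'a \<Rightarrow> real) \<Rightarrow> 'a prealis
     \<Rightarrow> (('a \<times> 'a) set \<Rightarrow> ('a \<times> 'a) set \<Rightarrow> real) \<Rightarrow> real" where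
  "cexpLL E p \<psi> f = expLL E p (\<lambda>L Lh. if consistent \<psi> L then f L Lh else 0) / prob_cons E p \<psi>"

definition sigma2 :: "('a::finite \<times> 'a) set \<Rightarrow> ('a \<times> 'a) set \<Rightarrow> ('a \<times> 'a) set \<Rightarrow> 'a prealis \<Rightarrow> 'a set \<Rightarrow> nat" where
  "sigma2 E L Lh \<psi> T = sigmaL (L2 E L Lh (T - dom \<psi>)) T"

definition Delta2 :: "('a::finite \<times> 'a) set \<Rightarrow> ('a \<times> 'a \<Rightarrow> real) \<Rightarrow> 'a prealis \<Rightarrow> 'a \<Rightarrow> real" where
  "Delta2 E p \<psi> v = cexpLL E p \<psi>
     (\<lambda>L Lh. real (sigma2 E L Lh \<psi> (insert v (dom \<psi>))) - real (sigma2 E L Lh \<psi> (dom \<psi>)))"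

text \<open>Adaptive policies: None = STOP, Some v = select node v.\<close>
type_synonym 'a policy = "'a prealis \<Rightarrow> 'a option"

definition pstep :: "'a policy \<Rightarrow> ('a \<Rightarrow> 'a set) \<Rightarrow> 'a prealis \<Rightarrow> 'a prealis" where
  "pstep \<pi> \<Phi> \<psi> = (case \<pi> \<psi> of None \<Rightarrow> \<psi> | Some v \<Rightarrow> \<psi>(v \<mapsto> \<Phi> v))"

definition prun :: "'a policy \<Rightarrow> ('a \<Rightarrow> 'a set) \<Rightarrow> nat \<Rightarrow> 'a prealis" where
  "prun \<pi> \<Phi> m = (pstep \<pi> \<Phi> ^^ m) Map.empty"

definition pstops :: "'a policy \<Rightarrow> ('a \<Rightarrow> 'a set) \<Rightarrow> bool" where
  "pstops \<pi> \<Phi> \<longleftrightarrow> (\<exists>m. \<pi> (prun \<pi> \<Phi> m) = None)"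

text \<open>Final partial realisation Psi_pi (meaningful when the run stops).\<close>
definition pfinal :: "'a policy \<Rightarrow> ('a \<Rightarrow> 'a set) \<Rightarrow> 'a prealis" where
  "pfinal \<pi> \<Phi> = prun \<pi> \<Phi> (LEAST m. \<pi> (prun \<pi> \<Phi> m) = None)"

definition policy_size :: "('a \<times> 'a) set \<Rightarrow> 'a policy \<Rightarrow> nat \<Rightarrow> bool" where
  "policy_size E \<pi> k \<longleftrightarrow>
     (\<forall>L\<subseteq>E. pstops \<pi> (realis L) \<and> card (dom (pfinal \<pi> (realis L))) = k)"

definition policy_value :: "('a::finite \<times> 'a) set \<Rightarrow> ('a \<times> 'a \<Rightarrow> real) \<Rightarrow> 'a policy \<Rightarrow> real" where
  "policy_value E p \<pi> = expL E p (\<lambda>L. real (sigmaL L (dom (pfinal \<pi> (realis L)))))"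

definition optimal_policy :: "('a::finite \<times> 'a) set \<Rightarrow> ('a \<times> 'a \<Rightarrow> real) \<Rightarrow> nat \<Rightarrow> 'a policy \<Rightarrow> bool" where
  "optimal_policy E p k \<pi> \<longleftrightarrow> policy_size E \<pi> k \<and>
     (\<forall>\<pi>'. policy_size E \<pi>' k \<longrightarrow> policy_value E p \<pi>' \<le> policy_value E p \<pi>)"

definition sel_prob :: "('a \<times> 'a) set \<Rightarrow> ('a \<times> 'a \<Rightarrow> real) \<Rightarrow> 'a policy \<Rightarrow> 'a \<Rightarrow> real" where
  "sel_prob E p \<pi> v = expL E p (\<lambda>L. if v \<in> dom (pfinal \<pi> (realis L)) then 1 else 0)"

end

theory Submission
  imports Defs
begin

text \<open>Fix \<open>L\<close>, \<open>Lhat\<close> and a node set \<open>S\<close>. Every node reachable from \<open>dom \<psi> \<union> S\<close> in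
\<open>L2(S - dom \<psi>)\<close> is reachable from \<open>dom \<psi>\<close> in \<open>L\<close>, or from a single \<open>v \<in> S - dom \<psi>\<close>
once the \<open>Lhat\<close>-edges out of \<open>v\<close> are added to \<open>L\<close>. Hence \<open>\<sigma>\<^sup>2(dom \<psi> \<union> S)\<close> is at
most \<open>\<sigma>\<^sub>L(dom \<psi>)\<close> plus the marginal gains of the nodes of \<open>S - dom \<psi>\<close>. Now let \<open>S\<close> be
the set of nodes selected by \<open>\<pi>\<close> under feedback \<open>Lhat\<close> and average. Whether \<open>\<pi>\<close>
selects \<open>v\<close> does not depend on the \<open>Lhat\<close>-edges out of \<open>v\<close>, which are observed only
after \<open>v\<close> is selected, while the gain of \<open>v\<close> depends on \<open>Lhat\<close> only through these
edges. Since edges are independent, the expectation of each product factorises into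
\<open>x\<^sub>v \<Delta>\<^sup>2\<^sub>\<psi>(v)\<close>.\<close>

lemma prL_nonneg:
  assumes "influence_graph E p"
  shows "0 \<le> prL E p L"
  using assms unfolding influence_graph_def prL_def by (auto intro: prod_nonneg)

lemma prL_Un:
  assumes "finite E" "F \<subseteq> E" "A \<subseteq> F" "B \<subseteq> E - F"
  shows "prL E p (A \<union> B) = prL F p A * prL (E - F) p B"
proof -
  have "prL E p (A \<union> B) = (\<Prod>e\<in>E - F. if e \<in> A \<union> B then p e else 1 - p e) *
      (\<Prod>e\<in>F. if e \<in> A \<union> B then p e else 1 - p e)"
    unfolding prL_def using assms by (simp add: prod.subset_diff)
  also have "(\<Prod>e\<in>E - F. if e \<in> A \<union> B then p e else 1 - p e) = prL (E - F) p B"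
    unfolding prL_def using assms by (intro prod.cong) auto
  also have "(\<Prod>e\<in>F. if e \<in> A \<union> B then p e else 1 - p e) = prL F p A"
    unfolding prL_def using assms by (intro prod.cong) auto
  finally show ?thesis by simp
qed

lemma sum_prL_eq_1:
  assumes "finite F"
  shows "(\<Sum>A\<in>Pow F. prL F p A) = 1"
proof -
  have "prL F p A = (\<Prod>e\<in>A. p e) * (\<Prod>e\<in>F - A. 1 - p e)" if "A \<subseteq> F" for A
  proof -
    have "prL F p A = (\<Prod>e\<in>F - A. if e \<in> A then p e else 1 - p e) *
        (\<Prod>e\<in>A. if e \<in> A then p e else 1 - p e)"
      unfolding prL_def using assms that by (simp add: prod.subset_diff)
    then show ?thesis by simp
  qed
  then have "(\<Sum>A\<in>Pow F. prL F p A) = (\<Sum>A\<in>Pow F. (\<Prod>e\<in>A. p e) * (\<Prod>e\<in>F - A. 1 - p e))"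
    by (intro sum.cong) auto
  also have "\<dots> = (\<Prod>e\<in>F. p e + (1 - p e))"
    by (rule prod_add[OF assms, symmetric])
  finally show ?thesis by simp
qed

lemma expL_split:
  assumes "finite E" "F \<subseteq> E"
  shows "expL E p h =
    (\<Sum>A\<in>Pow F. \<Sum>B\<in>Pow (E - F). prL F p A * prL (E - F) p B * h (A \<union> B))"
proof -
  let ?U = "\<lambda>(A, B). A \<union> B"
  have img: "Pow E = ?U ` (Pow F \<times> Pow (E - F))"
  proof
    show "Pow E \<subseteq> ?U ` (Pow F \<times> Pow (E - F))"
    proof
      fix L assume "L \<in> Pow E"
      then have "L = ?U (L \<inter> F, L - F)" "(L \<inter> F, L - F) \<in> Pow F \<times> Pow (E - F)" by auto
      then show "L \<in> ?U ` (Pow F \<times> Pow (E - F))" by blast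
    qed
  qed (use assms in auto)
  have inj: "inj_on ?U (Pow F \<times> Pow (E - F))"
    by (rule inj_onI) auto
  have "expL E p h = (\<Sum>(A, B)\<in>Pow F \<times> Pow (E - F). prL E p (A \<union> B) * h (A \<union> B))"
    unfolding expL_def by (subst img, subst sum.reindex[OF inj]) (simp add: case_prod_beta)
  also have "\<dots> = (\<Sum>(A, B)\<in>Pow F \<times> Pow (E - F). prL F p A * prL (E - F) p B * h (A \<union> B))"
    using assms by (intro sum.cong) (auto simp: prL_Un)
  finally show ?thesis by (simp add: sum.cartesian_product)
qed

lemma expL_restrict:
  assumes "finite E" "F \<subseteq> E"
  shows "expL E p (\<lambda>L. f (L \<inter> F)) = expL F p f"
proof -
  have "(A \<union> B) \<inter> F = A" if "A \<subseteq> F" "B \<subseteq> E - F" for A B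
    using that by auto
  then have "expL E p (\<lambda>L. f (L \<inter> F)) =
      (\<Sum>A\<in>Pow F. prL F p A * f A * (\<Sum>B\<in>Pow (E - F). prL (E - F) p B))"
    unfolding expL_split[OF assms] sum_distrib_left by (intro sum.cong refl) (auto simp: mult_ac)
  then show ?thesis
    using assms by (simp add: sum_prL_eq_1 expL_def)
qed

lemma expL_cong:
  assumes "\<And>L. L \<subseteq> E \<Longrightarrow> f L = g L"
  shows "expL E p f = expL E p g"
  unfolding expL_def using assms by (intro sum.cong) auto

lemma expL_mult_indep:
  assumes "finite E"
    and a: "\<And>L. L \<subseteq> E \<Longrightarrow> a L = a (L - F)"
    and b: "\<And>L. L \<subseteq> E \<Longrightarrow> b L = b (L \<inter> F)"
  shows "expL E p (\<lambda>L. a L * b L) = expL E p a * expL E p b"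
proof -
  define G where "G = E \<inter> F"
  have G: "G \<subseteq> E" "E - G \<subseteq> E" by (auto simp: G_def)
  have a_G: "a L = a (L \<inter> (E - G))" if "L \<subseteq> E" for L
  proof -
    have "L \<inter> (E - G) = L - F" using that by (auto simp: G_def)
    then show ?thesis using a[OF that] by simp
  qed
  have b_G: "b L = b (L \<inter> G)" if "L \<subseteq> E" for L
  proof -
    have "L \<inter> G = L \<inter> F" using that by (auto simp: G_def)
    then show ?thesis using b[OF that] by simp
  qed
  have a_marginal: "expL E p a = expL (E - G) p a"
  proof -
    have "expL E p a = expL E p (\<lambda>L. a (L \<inter> (E - G)))" using a_G by (rule expL_cong)
    also have "\<dots> = expL (E - G) p a" by (rule expL_restrict[OF assms(1) G(2)])
    finally show ?thesis .
  qed
  have b_marginal: "expL E p b = expL G p b"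
  proof -
    have "expL E p b = expL E p (\<lambda>L. b (L \<inter> G))" using b_G by (rule expL_cong)
    also have "\<dots> = expL G p b" by (rule expL_restrict[OF assms(1) G(1)])
    finally show ?thesis .
  qed
  have "expL E p (\<lambda>L. a L * b L) =
      (\<Sum>A\<in>Pow G. \<Sum>B\<in>Pow (E - G). (prL G p A * b A) * (prL (E - G) p B * a B))"
  proof -
    have "a (A \<union> B) = a B" "b (A \<union> B) = b A" if "A \<subseteq> G" "B \<subseteq> E - G" for A B
    proof -
      have AB: "A \<union> B \<subseteq> E" "(A \<union> B) \<inter> (E - G) = B" "(A \<union> B) \<inter> G = A"
        using that G by auto
      then show "a (A \<union> B) = a B" "b (A \<union> B) = b A"
        using a_G[OF AB(1)] b_G[OF AB(1)] by simp_all
    qed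
    then show ?thesis
      unfolding expL_split[OF assms(1) G(1)] by (intro sum.cong refl) (auto simp: mult_ac)
  qed
  also have "\<dots> = expL G p b * expL (E - G) p a"
    by (simp add: expL_def sum_product)
  finally show ?thesis
    by (simp add: a_marginal b_marginal)
qed

lemma expLL_eq_expL_expL:
  "expLL E p f = expL E p (\<lambda>L. expL E p (\<lambda>Lh. f L Lh))"
  unfolding expLL_def expL_def by (simp add: sum_distrib_left mult.assoc)

lemma prob_cons_nonneg:
  assumes "influence_graph E p"
  shows "0 \<le> prob_cons E p \<psi>"
  unfolding prob_cons_def expL_def using prL_nonneg[OF assms] by (simp add: sum_nonneg)

lemma cexpLL_mono:
  assumes "influence_graph E p"
    and "\<And>L Lh. L \<subseteq> E \<Longrightarrow> Lh \<subseteq> E \<Longrightarrow> consistent \<psi> L \<Longrightarrow> f L Lh \<le> g L Lh"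
  shows "cexpLL E p \<psi> f \<le> cexpLL E p \<psi> g"
  unfolding cexpLL_def expLL_def
  using assms prL_nonneg[OF assms(1)] prob_cons_nonneg[OF assms(1)]
  by (intro divide_right_mono sum_mono mult_left_mono) auto

lemma cexpLL_add:
  "cexpLL E p \<psi> (\<lambda>L Lh. f L Lh + g L Lh) = cexpLL E p \<psi> f + cexpLL E p \<psi> g"
proof -
  have "prL E p L * prL E p Lh * (if consistent \<psi> L then f L Lh + g L Lh else 0) =
      prL E p L * prL E p Lh * (if consistent \<psi> L then f L Lh else 0) +
      prL E p L * prL E p Lh * (if consistent \<psi> L then g L Lh else 0)" for L Lh
    by (simp add: distrib_left)
  then show ?thesis
    unfolding cexpLL_def expLL_def by (simp add: sum.distrib add_divide_distrib)
qed

lemma cexpLL_sum: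
  "cexpLL E p \<psi> (\<lambda>L Lh. \<Sum>v\<in>V. f v L Lh) = (\<Sum>v\<in>V. cexpLL E p \<psi> (f v))"
proof -
  have "prL E p L * prL E p Lh * (if consistent \<psi> L then \<Sum>v\<in>V. f v L Lh else 0) =
      (\<Sum>v\<in>V. prL E p L * prL E p Lh * (if consistent \<psi> L then f v L Lh else 0))" for L Lh
    by (simp add: sum_distrib_left)
  then show ?thesis
    unfolding cexpLL_def expLL_def
    by (simp add: sum_divide_distrib[symmetric] sum.swap[where A = V])
qed

lemma cexpLL_eq_cexpL:
  assumes "finite E"
  shows "cexpLL E p \<psi> (\<lambda>L Lh. h L) = cexpL E p \<psi> h"
proof -
  have "expLL E p (\<lambda>L Lh. if consistent \<psi> L then h L else 0) =
      expL E p (\<lambda>L. if consistent \<psi> L then h L else 0)"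
    unfolding expLL_eq_expL_expL expL_def
    by (simp add: sum_prL_eq_1[OF assms] flip: sum_distrib_right)
  then show ?thesis
    unfolding cexpLL_def cexpL_def by simp
qed

lemma cexpLL_mult_indep:
  assumes "finite E"
    and "\<And>Lh. Lh \<subseteq> E \<Longrightarrow> s Lh = s (Lh - F)"
    and "\<And>L Lh. Lh \<subseteq> E \<Longrightarrow> d L Lh = d L (Lh \<inter> F)"
  shows "cexpLL E p \<psi> (\<lambda>L Lh. s Lh * d L Lh) = expL E p s * cexpLL E p \<psi> d"
proof -
  have "expL E p (\<lambda>Lh. if consistent \<psi> L then s Lh * d L Lh else 0) =
      expL E p s * expL E p (\<lambda>Lh. if consistent \<psi> L then d L Lh else 0)" for L
  proof (cases "consistent \<psi> L")
    case True
    then show ?thesis using expL_mult_indep[OF assms(1), of s F "d L"] assms(2,3) by simp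
  qed (simp add: expL_def)
  then have "expLL E p (\<lambda>L Lh. if consistent \<psi> L then s Lh * d L Lh else 0) =
      expL E p s * expLL E p (\<lambda>L Lh. if consistent \<psi> L then d L Lh else 0)"
    unfolding expLL_eq_expL_expL by (simp add: expL_def sum_distrib_left mult_ac)
  then show ?thesis
    unfolding cexpLL_def by simp
qed

lemma dom_prun_Suc:
  "dom (prun \<pi> \<Phi> (Suc m)) = dom (prun \<pi> \<Phi> m) \<union> set_option (\<pi> (prun \<pi> \<Phi> m))"
  by (simp add: prun_def pstep_def split: option.split)

lemma dom_prun_mono:
  "i \<le> j \<Longrightarrow> dom (prun \<pi> \<Phi> i) \<subseteq> dom (prun \<pi> \<Phi> j)"
  by (induction j rule: dec_induct) (auto simp: dom_prun_Suc)

lemma prun_cong_outside: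
  assumes "\<And>u. u \<noteq> v \<Longrightarrow> \<Phi>1 u = \<Phi>2 u"
  shows "v \<notin> dom (prun \<pi> \<Phi>1 m) \<Longrightarrow> prun \<pi> \<Phi>1 m = prun \<pi> \<Phi>2 m"
proof (induction m)
  case 0
  then show ?case by (simp add: prun_def)
next
  case (Suc m)
  then have same: "prun \<pi> \<Phi>1 m = prun \<pi> \<Phi>2 m"
    by (simp add: dom_prun_Suc)
  show ?case
  proof (cases "\<pi> (prun \<pi> \<Phi>1 m)")
    case (Some u)
    then have "u \<noteq> v" using Suc.prems by (auto simp: dom_prun_Suc)
    then show ?thesis using Some same assms by (simp add: prun_def pstep_def)
  qed (use same in \<open>simp add: prun_def pstep_def\<close>)
qed

lemma pfinal_cong_outside:
  assumes agree: "\<And>u. u \<noteq> v \<Longrightarrow> \<Phi>1 u = \<Phi>2 u"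
    and stops: "pstops \<pi> \<Phi>2" and unselected: "v \<notin> dom (pfinal \<pi> \<Phi>2)"
  shows "pfinal \<pi> \<Phi>1 = pfinal \<pi> \<Phi>2"
proof -
  define M where "M = (LEAST m. \<pi> (prun \<pi> \<Phi>2 m) = None)"
  have stop_M: "\<pi> (prun \<pi> \<Phi>2 M) = None"
    unfolding M_def using stops unfolding pstops_def by (rule LeastI_ex)
  have run_before_M: "\<pi> (prun \<pi> \<Phi>2 i) \<noteq> None" if "i < M" for i
    using that unfolding M_def by (rule not_less_Least)
  have same_run: "prun \<pi> \<Phi>1 i = prun \<pi> \<Phi>2 i" if "i \<le> M" for i
  proof -
    have "v \<notin> dom (prun \<pi> \<Phi>2 i)"
      using unselected dom_prun_mono[OF that, of \<pi> \<Phi>2] unfolding pfinal_def M_def by blast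
    then show ?thesis
      using prun_cong_outside[of v \<Phi>2 \<Phi>1] agree by (metis)
  qed
  have "(LEAST m. \<pi> (prun \<pi> \<Phi>1 m) = None) = M"
  proof (rule Least_equality)
    show "\<pi> (prun \<pi> \<Phi>1 M) = None" using stop_M same_run by simp
  next
    fix m assume "\<pi> (prun \<pi> \<Phi>1 m) = None"
    then show "M \<le> m" using run_before_M[of m] same_run[of m] by (cases "m < M") auto
  qed
  then show ?thesis
    unfolding pfinal_def M_def[symmetric] using same_run by simp
qed

lemma selected_cong_outside:
  assumes "\<And>u. u \<noteq> v \<Longrightarrow> \<Phi>1 u = \<Phi>2 u" and "pstops \<pi> \<Phi>1" "pstops \<pi> \<Phi>2"
  shows "v \<in> dom (pfinal \<pi> \<Phi>1) \<longleftrightarrow> v \<in> dom (pfinal \<pi> \<Phi>2)"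
  using pfinal_cong_outside[of v \<Phi>1 \<Phi>2] pfinal_cong_outside[of v \<Phi>2 \<Phi>1] assms by metis

lemma selected_Diff_out_edges:
  assumes "pstops \<pi> (realis Lh)" "pstops \<pi> (realis (Lh - {e. fst e = v}))"
  shows "v \<in> dom (pfinal \<pi> (realis (Lh - {e. fst e = v}))) \<longleftrightarrow> v \<in> dom (pfinal \<pi> (realis Lh))"
  using assms by (intro selected_cong_outside) (auto simp: realis_def)

lemma sigmaL_eq_card_Image: "sigmaL L T = card (L\<^sup>* `` T)"
  unfolding sigmaL_def Image_def by (simp add: Bex_def)

lemma L2_empty [simp]: "L2 E L Lh {} = L"
  by (simp add: L2_def)

lemma sigma2_Int_out_edges:
  assumes "T - dom \<psi> \<subseteq> {v}"
  shows "sigma2 E L (Lh \<inter> {e. fst e = v}) \<psi> T = sigma2 E L Lh \<psi> T"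
proof -
  have "L2 E L (Lh \<inter> {e. fst e = v}) (T - dom \<psi>) = L2 E L Lh (T - dom \<psi>)"
    using assms by (auto simp: L2_def)
  then show ?thesis by (simp add: sigma2_def)
qed

lemma rtrancl_L2_Image_subset:
  "(L2 E L Lh (S - D))\<^sup>* `` (D \<union> S) \<subseteq> L\<^sup>* `` D \<union> (\<Union>v\<in>S - D. (L2 E L Lh {v})\<^sup>* `` {v})"
proof
  fix w assume "w \<in> (L2 E L Lh (S - D))\<^sup>* `` (D \<union> S)"
  then obtain t where "t \<in> D \<union> S" "(t, w) \<in> (L2 E L Lh (S - D))\<^sup>*" by blast
  from this(2) show "w \<in> L\<^sup>* `` D \<union> (\<Union>v\<in>S - D. (L2 E L Lh {v})\<^sup>* `` {v})"
  proof (induction rule: rtrancl_induct)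
    case base
    then show ?case using \<open>t \<in> D \<union> S\<close> by blast
  next
    case (step y z)
    from step.hyps(2) consider "(y, z) \<in> L" | "(y, z) \<in> L2 E L Lh {y}" "y \<in> S - D"
      by (auto simp: L2_def)
    then show ?case
    proof cases
      case 1
      then have "(y, z) \<in> L2 E L Lh {v}" for v by (simp add: L2_def)
      with 1 step.IH show ?thesis by (blast intro: rtrancl_into_rtrancl)
    next
      case 2
      then show ?thesis by blast
    qed
  qed
qed

lemma card_Un_UN_le:
  assumes "finite A" "finite V" "\<And>v. v \<in> V \<Longrightarrow> finite (B v)"
  shows "real (card (A \<union> (\<Union>v\<in>V. B v)))
    \<le> real (card A) + (\<Sum>v\<in>V. real (card (A \<union> B v)) - real (card A))"
proof -
  have "card (A \<union> (\<Union>v\<in>V. B v)) = card (A \<union> (\<Union>v\<in>V. B v - A))"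
    by (rule arg_cong[where f = card]) blast
  also have "\<dots> \<le> card A + card (\<Union>v\<in>V. B v - A)"
    by (rule card_Un_le)
  also have "\<dots> \<le> card A + (\<Sum>v\<in>V. card (B v - A))"
    using card_UN_le[OF assms(2), of "\<lambda>v. B v - A"] by (rule add_left_mono)
  finally have "real (card (A \<union> (\<Union>v\<in>V. B v))) \<le> real (card A) + (\<Sum>v\<in>V. real (card (B v - A)))"
    by (simp flip: of_nat_sum of_nat_add)
  moreover have "card (A \<union> B v) = card A + card (B v - A)" if "v \<in> V" for v
  proof -
    have "card (A \<union> B v) = card (A \<union> (B v - A))" by simp
    also have "\<dots> = card A + card (B v - A)"
      using assms that by (intro card_Un_disjoint) auto
    finally show ?thesis .
  qed
  ultimately show ?thesis by simp
qed

lemma sigma2_Un_le: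
  fixes L Lh :: "('a::finite \<times> 'a) set"
  shows "real (sigma2 E L Lh \<psi> (dom \<psi> \<union> S)) \<le> real (sigmaL L (dom \<psi>))
    + (\<Sum>v\<in>S - dom \<psi>. real (sigma2 E L Lh \<psi> (insert v (dom \<psi>))) - real (sigma2 E L Lh \<psi> (dom \<psi>)))"
proof -
  define D where "D = dom \<psi>"
  define A where "A = L\<^sup>* `` D"
  define B where "B v = (L2 E L Lh {v})\<^sup>* `` {v}" for v
  have sigma2_D: "sigma2 E L Lh \<psi> D = card A"
    by (simp add: sigma2_def sigmaL_eq_card_Image A_def D_def)
  have gain: "card (A \<union> B v) \<le> sigma2 E L Lh \<psi> (insert v D)" if "v \<notin> D" for v
  proof -
    have "insert v D - D = {v}" using that by auto
    moreover have "L \<subseteq> L2 E L Lh {v}" by (auto simp: L2_def)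
    then have "A \<union> B v \<subseteq> (L2 E L Lh {v})\<^sup>* `` insert v D"
      unfolding A_def B_def using rtrancl_mono by blast
    ultimately show ?thesis
      by (simp add: sigma2_def sigmaL_eq_card_Image D_def card_mono)
  qed
  have "(D \<union> S) - dom \<psi> = S - D" by (auto simp: D_def)
  then have "sigma2 E L Lh \<psi> (D \<union> S) \<le> card (A \<union> (\<Union>v\<in>S - D. B v))"
    unfolding sigma2_def sigmaL_eq_card_Image A_def B_def
    by (simp add: card_mono rtrancl_L2_Image_subset)
  then have "real (sigma2 E L Lh \<psi> (D \<union> S))
      \<le> real (card A) + (\<Sum>v\<in>S - D. real (card (A \<union> B v)) - real (card A))"
    using card_Un_UN_le[of A "S - D" B] by simp
  also have "\<dots> \<le> real (sigmaL L D)
      + (\<Sum>v\<in>S - D. real (sigma2 E L Lh \<psi> (insert v D)) - real (sigma2 E L Lh \<psi> D))"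
    using gain by (intro add_mono sum_mono) (auto simp: sigma2_D A_def sigmaL_eq_card_Image)
  finally show ?thesis unfolding D_def .
qed

lemma cexpLL_selected_mult_gain:
  fixes E :: "('a::finite \<times> 'a) set"
  assumes stops: "\<And>L. L \<subseteq> E \<Longrightarrow> pstops \<pi> (realis L)"
  shows "cexpLL E p \<psi> (\<lambda>L Lh. of_bool (v \<in> dom (pfinal \<pi> (realis Lh)))
      * (real (sigma2 E L Lh \<psi> (insert v (dom \<psi>))) - real (sigma2 E L Lh \<psi> (dom \<psi>))))
    = sel_prob E p \<pi> v * Delta2 E p \<psi> v"
proof -
  have "cexpLL E p \<psi> (\<lambda>L Lh. of_bool (v \<in> dom (pfinal \<pi> (realis Lh)))
      * (real (sigma2 E L Lh \<psi> (insert v (dom \<psi>))) - real (sigma2 E L Lh \<psi> (dom \<psi>))))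
    = expL E p (\<lambda>Lh. of_bool (v \<in> dom (pfinal \<pi> (realis Lh))))
      * cexpLL E p \<psi> (\<lambda>L Lh. real (sigma2 E L Lh \<psi> (insert v (dom \<psi>))) - real (sigma2 E L Lh \<psi> (dom \<psi>)))"
  proof (rule cexpLL_mult_indep[where F = "{e. fst e = v}"])
    fix Lh assume "Lh \<subseteq> E"
    moreover from this have "Lh - {e. fst e = v} \<subseteq> E" by blast
    ultimately show "of_bool (v \<in> dom (pfinal \<pi> (realis Lh)))
        = of_bool (v \<in> dom (pfinal \<pi> (realis (Lh - {e. fst e = v}))))"
      by (simp add: selected_Diff_out_edges stops)
  qed (simp_all add: sigma2_Int_out_edges insert_Diff_if)
  then show ?thesis
    unfolding sel_prob_def Delta2_def by (simp add: of_bool_def)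
qed

theorem lemma16:
  fixes E :: "('a::finite \<times> 'a) set" and p :: "'a \<times> 'a \<Rightarrow> real"
    and k :: nat and \<pi> :: "'a policy" and \<psi> :: "'a prealis"
  assumes "influence_graph E p"
    and "2 \<le> k" and "k \<le> card (UNIV :: 'a set)"
    and "optimal_policy E p k \<pi>"
    and "partial_realisation E \<psi>"
    and "prob_cons E p \<psi> > 0"
  shows "cexpLL E p \<psi> (\<lambda>L Lh. real (sigma2 E L Lh \<psi> (dom \<psi> \<union> dom (pfinal \<pi> (realis Lh)))))
         \<le> cexpL E p \<psi> (\<lambda>L. real (sigmaL L (dom \<psi>)))
           + (\<Sum>v\<in>UNIV - dom \<psi>. sel_prob E p \<pi> v * Delta2 E p \<psi> v)"
proof -
  let ?D = "dom \<psi>"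
  define gain where
    "gain v L Lh = real (sigma2 E L Lh \<psi> (insert v ?D)) - real (sigma2 E L Lh \<psi> ?D)" for v L Lh
  have stops: "pstops \<pi> (realis L)" if "L \<subseteq> E" for L
    using assms(4) that by (auto simp: optimal_policy_def policy_size_def)
  have "cexpLL E p \<psi> (\<lambda>L Lh. real (sigma2 E L Lh \<psi> (?D \<union> dom (pfinal \<pi> (realis Lh)))))
      \<le> cexpLL E p \<psi> (\<lambda>L Lh. real (sigmaL L ?D)
        + (\<Sum>v\<in>UNIV - ?D. of_bool (v \<in> dom (pfinal \<pi> (realis Lh))) * gain v L Lh))"
  proof (rule cexpLL_mono[OF assms(1)])
    fix L Lh
    have "(\<Sum>v\<in>UNIV - ?D. of_bool (v \<in> dom (pfinal \<pi> (realis Lh))) * gain v L Lh)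
        = (\<Sum>v\<in>dom (pfinal \<pi> (realis Lh)) - ?D. gain v L Lh)"
      by (simp add: Diff_eq Int_commute)
    then show "real (sigma2 E L Lh \<psi> (?D \<union> dom (pfinal \<pi> (realis Lh))))
        \<le> real (sigmaL L ?D)
          + (\<Sum>v\<in>UNIV - ?D. of_bool (v \<in> dom (pfinal \<pi> (realis Lh))) * gain v L Lh)"
      using sigma2_Un_le unfolding gain_def by simp
  qed
  also have "\<dots> = cexpL E p \<psi> (\<lambda>L. real (sigmaL L ?D))
      + (\<Sum>v\<in>UNIV - ?D. cexpLL E p \<psi> (\<lambda>L Lh. of_bool (v \<in> dom (pfinal \<pi> (realis Lh))) * gain v L Lh))"
    by (simp add: cexpLL_add cexpLL_sum cexpLL_eq_cexpL del: sum_of_bool_mult_eq)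
  also have "\<dots> = cexpL E p \<psi> (\<lambda>L. real (sigmaL L ?D))
      + (\<Sum>v\<in>UNIV - ?D. sel_prob E p \<pi> v * Delta2 E p \<psi> v)"
    by (simp only: gain_def cexpLL_selected_mult_gain[where E = E, OF stops])
  finally show ?thesis .
qed

end
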